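(* Let $\mathbf{x}$ be an infinite word over a finite alphabet and $n\ge2$ an integer with $r(n,\mathbf{x})\ge r(n-1,\mathbf{x})+2$. Then $r(n,\mathbf{x})\ge 2n+1$.
   Context: For $\mathbf{x}=x_1x_2\ldots$ and $i\le j$, $x_i^j=x_i\cdots x_j$; $r(n,\mathbf{x})=\min\{m\ge1:\ x_i^{i+n-1}=x_{m-n+1}^{m}\text{ for some } 1\le i\le m-n\}$. *)

theory Defs
  imports Main
begin

text \<open>An infinite word x = x_1 x_2 ... is modelled as a function nat => 'a, where
  the letter at position i (i >= 1) is x i; the value x 0 is never used.\<close>

definition factor :: "(nat \<Rightarrow> 'a) \<Rightarrow> nat \<Rightarrow> nat \<Rightarrow> 'a list" where
  "factor x i j = map x [i..<Suc j]"

definition rep :: "nat \<Rightarrow> (nat \<Rightarrow> 'a) \<Rightarrow> nat" where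
  "rep n x = (LEAST m. m \<ge> 1 \<and>
      (\<exists>i. 1 \<le> i \<and> i + n \<le> m \<and> factor x i (i + n - 1) = factor x (m + 1 - n) m))"

end

theory Submission
  imports Defs
begin

text \<open>Let m = r(n,x) and m' = r(n-1,x). The repetition defining m, with occurrences at i and i + p,
  makes x_i .. x_m p-periodic; likewise x_j .. x_m' is s-periodic. If m <= 2n these windows overlap
  in at least p + s - 1 letters, so by Fine and Wilf gcd(p,s) is a period of both. A shorter
  period in either window would give an n-repetition ending before m, hence p = s = gcd(p,s).
  But then the p-periodicity of x_i .. x_m extends the window x_j .. x_m' by one letter, giving an
  n-repetition ending at m' + 1 < m.\<close>

definition periodic_on :: "(nat \<Rightarrow> 'a) \<Rightarrow> nat \<Rightarrow> nat \<Rightarrow> nat \<Rightarrow> bool" where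
  "periodic_on x a b p \<longleftrightarrow> (\<forall>t. a \<le> t \<longrightarrow> t + p \<le> b \<longrightarrow> x t = x (t + p))"

lemma periodic_on_mono:
  "periodic_on x a b p \<Longrightarrow> a \<le> a' \<Longrightarrow> b' \<le> b \<Longrightarrow> periodic_on x a' b' p"
  unfolding periodic_on_def by (meson le_trans)

lemma periodic_on_add_mult:
  assumes "periodic_on x a b p" "a \<le> t" "t + k * p \<le> b"
  shows "x (t + k * p) = x t"
  using assms(3)
proof (induction k)
  case (Suc k)
  have "x (t + Suc k * p) = x (t + k * p)"
    using assms(1,2) Suc.prems unfolding periodic_on_def by (auto simp: algebra_simps)
  also have "\<dots> = x t" using Suc by simp
  finally show ?case .
qed simp

lemma periodic_on_mod_eq:
  assumes "periodic_on x a b p" "a \<le> t" "t \<le> b" "a \<le> u" "u \<le> b" "t mod p = u mod p"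
  shows "x t = x u"
proof -
  have ordered: "x t = x u" if le: "a \<le> t" "u \<le> b" "t \<le> u" and mod: "t mod p = u mod p" for t u
  proof -
    have "p dvd u - t" using mod_eq_dvd_iff_nat[OF le(3), of p] mod by simp
    then obtain k where "u - t = k * p" by (metis dvd_def mult.commute)
    then have "u = t + k * p" using le(3) by simp
    then show ?thesis using periodic_on_add_mult[OF assms(1) le(1)] le(2) by simp
  qed
  show ?thesis
  proof (cases "t \<le> u")
    case True
    then show ?thesis using ordered assms(2,5,6) by blast
  next
    case False
    then show ?thesis using ordered[of u t] assms(3,4,6) by simp
  qed
qed

lemma exists_mod_eq_in_interval:
  fixes q :: nat
  assumes "0 < q" "c + q \<le> d + 1"
  obtains t' where "c \<le> t'" "t' \<le> d" "t' mod q = t mod q"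
proof
  define r where "r = (t + q * c - c) mod q"
  have "r < q" unfolding r_def using assms(1) by simp
  then show "c + r \<le> d" using assms(2) by simp
  show "c \<le> c + r" by simp
  have "c \<le> q * c" using assms(1) by simp
  then have "c + (t + q * c - c) = t + q * c" by linarith
  then show "(c + r) mod q = t mod q" unfolding r_def by (metis mod_add_right_eq mod_mult_self2)
qed

text \<open>Every residue class modulo q meets [c,d], and x is constant on residue classes
  modulo q within [a,b].\<close>

lemma periodic_on_divisor_extend:
  assumes "periodic_on x a b q" "0 < q" "g dvd q"
    and "a \<le> c" "d \<le> b" "c + q \<le> d + 1" "periodic_on x c d g"
  shows "periodic_on x a b g"
  unfolding periodic_on_def
proof (intro allI impI)
  fix t assume t: "a \<le> t" "t + g \<le> b"
  obtain t' where t': "c \<le> t'" "t' \<le> d" "t' mod q = t mod q"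
    using exists_mod_eq_in_interval[OF assms(2,6)] .
  obtain u' where u': "c \<le> u'" "u' \<le> d" "u' mod q = (t + g) mod q"
    using exists_mod_eq_in_interval[OF assms(2,6)] .
  have "t' mod g = t mod g" "u' mod g = (t + g) mod g"
    using t'(3) u'(3) mod_mod_cancel[OF assms(3)] by metis+
  then have "x t' = x u'" using periodic_on_mod_eq[OF assms(7) t'(1,2) u'(1,2)] by simp
  moreover have "x t = x t'"
    using periodic_on_mod_eq[OF assms(1), of t t'] t t' assms(4,5) by simp
  moreover have "x (t + g) = x u'"
    using periodic_on_mod_eq[OF assms(1), of "t + g" u'] t u' assms(4,5) by simp
  ultimately show "x t = x (t + g)" by simp
qed

lemma periodic_on_diff:
  assumes "periodic_on x a b p" "periodic_on x a b q" "p < q" "a + q \<le> b + 1"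
  shows "periodic_on x a (b - p) (q - p)"
  unfolding periodic_on_def
proof (intro allI impI)
  fix t assume t: "a \<le> t" "t + (q - p) \<le> b - p"
  then have "t + q \<le> b" "a \<le> t + (q - p)" "t + (q - p) + p \<le> b" using assms(3,4) by linarith+
  then have "x t = x (t + q)" "x (t + (q - p)) = x (t + (q - p) + p)"
    using assms(1,2) t(1) unfolding periodic_on_def by blast+
  then show "x t = x (t + (q - p))" using assms(3) by simp
qed

text \<open>Fine and Wilf: subtracting the smaller period from the larger one shrinks the interval
  by the smaller period, and the divisor extension lemma recovers the full interval.\<close>

theorem fine_wilf:
  assumes "periodic_on x a b p" "periodic_on x a b q" "0 < p" "0 < q"
    and "p + q \<le> b + 1 - a + gcd p q"
  shows "periodic_on x a b (gcd p q)"
  using assms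
proof (induction "p + q" arbitrary: p q b rule: less_induct)
  case less
  have ordered: "periodic_on x a b (gcd p' q')"
    if "p' < q'" "p' + q' = p + q" "periodic_on x a b p'" "periodic_on x a b q'" "0 < p'"
      "p' + q' \<le> b + 1 - a + gcd p' q'" for p' q'
  proof -
    have gcd_eq: "gcd p' (q' - p') = gcd p' q'"
      using that(1) by (metis gcd.commute gcd_diff1_nat less_imp_le)
    have "gcd p' q' \<le> p'" using that(5) by (simp add: gcd_le1_nat)
    then have window: "a + q' \<le> b + 1" using that(1,6) by linarith
    have "gcd p' q' \<le> q' - p'"
      using that(1) gcd_eq by (metis dvd_imp_le gcd_dvd2 zero_less_diff)
    then have short_window: "a + p' \<le> b - p' + 1" using that(1,6) window by linarith
    have "periodic_on x a (b - p') (gcd p' (q' - p'))"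
    proof (rule less.hyps)
      show "periodic_on x a (b - p') p'" using that(3) by (rule periodic_on_mono) auto
      show "periodic_on x a (b - p') (q' - p')" using periodic_on_diff[OF that(3,4,1) window] .
      show "p' + (q' - p') \<le> b - p' + 1 - a + gcd p' (q' - p')"
        using gcd_eq that(1,6) window by linarith
    qed (use that(1,2,5) in auto)
    then show ?thesis
      using periodic_on_divisor_extend[OF that(3,5) _ order_refl _ short_window] gcd_eq by simp
  qed
  consider "p = q" | "p < q" | "q < p" by linarith
  then show ?case
  proof cases
    case 1 then show ?thesis using less.prems(1) by simp
  next
    case 2 then show ?thesis using ordered less.prems by blast
  next
    case 3 then show ?thesis using ordered[of q p] less.prems by (simp add: gcd.commute add.commute)
  qed
qed

lemma fine_wilf_overlap:
  assumes "periodic_on x a b p" "periodic_on x a' b' q" "0 < p" "0 < q"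
    and "a \<le> c" "a' \<le> c" "d \<le> b" "d \<le> b'" "p + q \<le> d + 1 - c + gcd p q"
  shows "periodic_on x a b (gcd p q)" "periodic_on x a' b' (gcd p q)"
proof -
  have "periodic_on x c d (gcd p q)"
  proof (rule fine_wilf)
    show "periodic_on x c d p" using assms(1,5,7) by (rule periodic_on_mono)
    show "periodic_on x c d q" using assms(2,6,8) by (rule periodic_on_mono)
  qed (use assms(3,4,9) in auto)
  moreover have "c + p \<le> d + 1" "c + q \<le> d + 1"
    using assms(3,4,9) gcd_le1_nat[of p q] gcd_le2_nat[of q p] by linarith+
  ultimately show "periodic_on x a b (gcd p q)" "periodic_on x a' b' (gcd p q)"
    using periodic_on_divisor_extend assms(1-8) by (metis gcd_dvd1, metis gcd_dvd2)
qed

lemma periodic_on_extend_right: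
  assumes "periodic_on x a b p" "x (b + 1 - p) = x (b + 1)"
  shows "periodic_on x a (b + 1) p"
  unfolding periodic_on_def
proof (intro allI impI)
  fix t assume "a \<le> t" "t + p \<le> b + 1"
  then consider "t + p \<le> b" | "t = b + 1 - p" "t + p = b + 1" by linarith
  then show "x t = x (t + p)"
    by cases (use assms \<open>a \<le> t\<close> in \<open>auto simp: periodic_on_def\<close>)
qed

lemma factor_eq_factor_iff:
  "factor x i (i + n - 1) = factor x j (j + n - 1) \<longleftrightarrow> (\<forall>k<n. x (i + k) = x (j + k))"
  if "1 \<le> n"
  using that unfolding factor_def by (auto simp: list_eq_iff_nth_eq simp del: upt_Suc)

lemma periodic_on_window_iff:
  "periodic_on x i (i + q + n - 1) q \<longleftrightarrow> (\<forall>k<n. x (i + k) = x (i + q + k))"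
  if "1 \<le> n"
proof
  assume "periodic_on x i (i + q + n - 1) q"
  then show "\<forall>k<n. x (i + k) = x (i + q + k)"
    using that unfolding periodic_on_def by (auto simp: add_ac)
next
  assume shift: "\<forall>k<n. x (i + k) = x (i + q + k)"
  show "periodic_on x i (i + q + n - 1) q"
    unfolding periodic_on_def
  proof (intro allI impI)
    fix t assume "i \<le> t" "t + q \<le> i + q + n - 1"
    then show "x t = x (t + q)" using shift[rule_format, of "t - i"] that by (simp add: add_ac)
  qed
qed

lemma rep_eq_Least_periodic_on:
  assumes "1 \<le> n"
  shows "rep n x = (LEAST m. \<exists>i q. 1 \<le> i \<and> 1 \<le> q \<and> m = i + q + n - 1 \<and> periodic_on x i m q)"
  unfolding rep_def
proof (rule arg_cong[where f = Least], rule ext, rule iffI)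
  fix m
  assume "1 \<le> m \<and> (\<exists>i. 1 \<le> i \<and> i + n \<le> m \<and> factor x i (i + n - 1) = factor x (m + 1 - n) m)"
  then obtain i where i: "1 \<le> i" "i + n \<le> m" "factor x i (i + n - 1) = factor x (m + 1 - n) m"
    by blast
  define q where "q = m + 1 - n - i"
  have m: "m = i + q + n - 1" "m + 1 - n = i + q" using i(2) assms unfolding q_def by auto
  have "periodic_on x i m q"
    using i(3) m factor_eq_factor_iff[OF assms, of x i "i + q"] periodic_on_window_iff[OF assms]
    by metis
  moreover have "1 \<le> q" using i(2) unfolding q_def by simp
  ultimately show "\<exists>i q. 1 \<le> i \<and> 1 \<le> q \<and> m = i + q + n - 1 \<and> periodic_on x i m q"
    using i(1) m(1) by blast
next
  fix m
  assume "\<exists>i q. 1 \<le> i \<and> 1 \<le> q \<and> m = i + q + n - 1 \<and> periodic_on x i m q"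
  then obtain i q where iq: "1 \<le> i" "1 \<le> q" "m = i + q + n - 1" "periodic_on x i m q" by blast
  then have "factor x i (i + n - 1) = factor x (i + q) (i + q + n - 1)"
    using factor_eq_factor_iff[OF assms] periodic_on_window_iff[OF assms] by blast
  then show "1 \<le> m \<and> (\<exists>i. 1 \<le> i \<and> i + n \<le> m \<and> factor x i (i + n - 1) = factor x (m + 1 - n) m)"
    using iq assms by (intro conjI exI[of _ i]) auto
qed

lemma periodic_on_before_rep:
  assumes "1 \<le> n" "periodic_on x i b q" "1 \<le> i" "1 \<le> q" "b < rep n x"
  shows "b < i + q + n - 1"
proof (rule ccontr)
  assume "\<not> b < i + q + n - 1"
  then have "periodic_on x i (i + q + n - 1) q"
    using periodic_on_mono[OF assms(2), of i "i + q + n - 1"] by simp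
  then have "rep n x \<le> i + q + n - 1"
    unfolding rep_eq_Least_periodic_on[OF assms(1)] using assms(3,4) by (intro Least_le) blast
  then show False using \<open>\<not> b < i + q + n - 1\<close> assms(5) by linarith
qed

lemma exists_periodic_window:
  assumes "finite (range x)" "1 \<le> n"
  obtains i q where "1 \<le> i" "1 \<le> q" "periodic_on x i (i + q + n - 1) q"
proof -
  define w where "w t = map (\<lambda>k. x (Suc t + k)) [0..<n]" for t
  have "range w \<subseteq> {ws. set ws \<subseteq> range x \<and> length ws = n}" unfolding w_def by auto
  then have "finite (range w)" using finite_lists_length_eq[OF assms(1)] by (rule finite_subset)
  then have "\<not> inj w" using finite_imageD infinite_UNIV_nat by blast
  then obtain t u where "t < u" "w t = w u" unfolding inj_def by (metis linorder_neqE_nat)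
  then have "\<forall>k<n. x (Suc t + k) = x (Suc t + (u - t) + k)"
    unfolding w_def by (auto simp: list_eq_iff_nth_eq)
  then have "periodic_on x (Suc t) (Suc t + (u - t) + n - 1) (u - t)"
    using periodic_on_window_iff[OF assms(2)] by blast
  then show thesis using that[of "Suc t" "u - t"] \<open>t < u\<close> by simp
qed

lemma rep_obtain_periodic_on:
  assumes "finite (range x)" "1 \<le> n"
  obtains i q where "1 \<le> i" "1 \<le> q" "rep n x = i + q + n - 1" "periodic_on x i (rep n x) q"
proof -
  obtain i q where "1 \<le> i" "1 \<le> q" "periodic_on x i (i + q + n - 1) q"
    using exists_periodic_window[OF assms] .
  then have "\<exists>m i q. 1 \<le> i \<and> 1 \<le> q \<and> m = i + q + n - 1 \<and> periodic_on x i m q" by blast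
  from LeastI_ex[OF this] show thesis
    using that unfolding rep_eq_Least_periodic_on[OF assms(2)] by blast
qed

theorem lemma5p4:
  fixes x :: "nat \<Rightarrow> 'a" and n :: nat
  assumes "finite (range x)"
    and "n \<ge> 2"
    and "rep n x \<ge> rep (n - 1) x + 2"
  shows "rep n x \<ge> 2 * n + 1"
proof (rule ccontr)
  assume "\<not> ?thesis"
  then have short: "rep n x \<le> 2 * n" by simp
  have n_pos: "1 \<le> n" "1 \<le> n - 1" using assms(2) by simp_all
  obtain i p where i: "1 \<le> i" "1 \<le> p" "rep n x = i + p + n - 1" and per_p: "periodic_on x i (rep n x) p"
    using rep_obtain_periodic_on[OF assms(1) n_pos(1)] by blast
  obtain j s where j: "1 \<le> j" "1 \<le> s" "rep (n - 1) x = j + s + (n - 1) - 1"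
    and per_s: "periodic_on x j (rep (n - 1) x) s"
    using rep_obtain_periodic_on[OF assms(1) n_pos(2)] by blast
  define g where "g = gcd p s"
  have g: "1 \<le> g" "g \<le> p" "g \<le> s"
    unfolding g_def using i(2) j(2) by (simp_all add: Suc_le_eq)
  \<comment> \<open>rep n x \<le> 2 * n is exactly what makes the windows overlap enough for Fine and Wilf\<close>
  have "periodic_on x i (rep n x) g" and per_g: "periodic_on x j (rep (n - 1) x) g"
    using fine_wilf_overlap[OF per_p per_s, of "max i j" "rep (n - 1) x"]
      i j g(1) short assms(2,3) by (simp_all add: g_def)
  from periodic_on_mono[OF this(1), of i "rep n x - 1"]
  have "periodic_on x i (rep n x - 1) g" by simp
  have "p \<le> g" "s \<le> g"
    using periodic_on_before_rep[OF n_pos(1) \<open>periodic_on x i (rep n x - 1) g\<close> i(1) g(1)]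
      periodic_on_before_rep[OF n_pos(1) per_g j(1) g(1)] i(3) j(3) assms(3) by linarith+
  then have "s = p" using g by simp
  have "periodic_on x j (rep (n - 1) x + 1) p"
  proof (rule periodic_on_extend_right)
    show "periodic_on x j (rep (n - 1) x) p" using per_s \<open>s = p\<close> by simp
    have "i \<le> rep (n - 1) x + 1 - p" "rep (n - 1) x + 1 - p + p = rep (n - 1) x + 1"
      "rep (n - 1) x + 1 \<le> rep n x"
      using i j \<open>s = p\<close> assms(3) short by linarith+
    then show "x (rep (n - 1) x + 1 - p) = x (rep (n - 1) x + 1)"
      using per_p unfolding periodic_on_def by metis
  qed
  from periodic_on_before_rep[OF n_pos(1) this j(1) i(2)] show False
    using j(3) \<open>s = p\<close> assms(3) by linarith
qed

end
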